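(* Let $k,m,t$ be positive integers with $m+t\le k$ and $q$ a prime power. Let $B$ be the bipartite graph with left vertices the $t$-dimensional subspaces $V$ of $\mathbb{F}_q^k$, right vertices the $(m+t)$-dimensional subspaces $X$ of $\mathbb{F}_q^k$, and $V$ adjacent to $X$ iff $V\subseteq X$. For every $(m+t)$-dimensional subspace $X$ fix a bijection $V\mapsto T_{V,X}$ from the $t$-dimensional subspaces of $X$ onto the $m$-dimensional subspaces of $X$ such that $T_{V,X}\oplus V=X$ for every such $V$. For an $m$-dimensional subspace $T$ of $\mathbb{F}_q^k$ let $\mathcal{C}_T=\{\{V,X\}\in E(B): T_{V,X}=T\}$. Then $\mathcal{C}_T$ is an induced matching of $B$ of size $\binom{k-m}{t}_q$.
   Context: $\binom{a}{b}_q$ denotes the Gaussian binomial coefficient (number of $b$-dimensional subspaces of $\mathbb{F}_q^a$). An induced matching of a bipartite graph $B$ is a set $\mathcal{C}\subseteq E(B)$ such that for any two distinct $\{k_1,f_1\},\{k_2,f_2\}\in\mathcal{C}$: $k_1\ne k_2$, $f_1\ne f_2$, and $\{k_1,f_2\},\{k_2,f_1\}\notin E(B)$. *)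

theory Defs
  imports "HOL-Analysis.Analysis"
begin

text \<open>Gaussian binomial coefficient via the standard product formula
  (this is exactly the number of b-dimensional subspaces of F_q^a).\<close>
definition gauss_binom :: "nat \<Rightarrow> nat \<Rightarrow> nat \<Rightarrow> nat" where
  "gauss_binom q a b =
     (if b \<le> a then (\<Prod>i<b. (q ^ a - q ^ i)) div (\<Prod>i<b. (q ^ b - q ^ i)) else 0)"

definition subspaces_of_dim :: "nat \<Rightarrow> ('a::field ^ 'n) set set" where
  "subspaces_of_dim d = {W. vec.subspace W \<and> vec.dim W = d}"

definition bip_edges :: "'l set \<Rightarrow> 'r set \<Rightarrow> ('l \<Rightarrow> 'r \<Rightarrow> bool) \<Rightarrow> ('l \<times> 'r) set" where
  "bip_edges L R E = {(l, r). l \<in> L \<and> r \<in> R \<and> E l r}"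

definition induced_matching ::
  "'l set \<Rightarrow> 'r set \<Rightarrow> ('l \<Rightarrow> 'r \<Rightarrow> bool) \<Rightarrow> ('l \<times> 'r) set \<Rightarrow> bool" where
  "induced_matching L R E C \<longleftrightarrow>
     C \<subseteq> bip_edges L R E \<and>
     (\<forall>(k1, f1) \<in> C. \<forall>(k2, f2) \<in> C. (k1, f1) \<noteq> (k2, f2) \<longrightarrow>
        k1 \<noteq> k2 \<and> f1 \<noteq> f2 \<and>
        (k1, f2) \<notin> bip_edges L R E \<and> (k2, f1) \<notin> bip_edges L R E)"

end

theory Submission
  imports Defs
begin

text \<open>If \<open>(V\<^sub>1, X\<^sub>1)\<close> and \<open>(V\<^sub>2, X\<^sub>2)\<close> both have complement \<open>T\<close> and \<open>V\<^sub>1 \<subseteq> X\<^sub>2\<close>, then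
  \<open>X\<^sub>1 = T + V\<^sub>1 \<subseteq> X\<^sub>2\<close>, so \<open>X\<^sub>1 = X\<^sub>2\<close> by dimension, and \<open>V\<^sub>1 = V\<^sub>2\<close> because \<open>V \<mapsto> T\<^sub>V\<^sub>,\<^sub>X\<^sub>2\<close>
  is injective. This makes \<open>\<C>\<^sub>T\<close> an induced matching, and \<open>(V, X) \<mapsto> X\<close> a bijection from
  \<open>\<C>\<^sub>T\<close> onto the \<open>(m+t)\<close>-spaces containing \<open>T\<close>. These are counted by double counting lists
  of \<open>t\<close> vectors independent over \<open>T\<close>: there are \<open>\<Prod>\<^sub>i\<^sub><\<^sub>t (q\<^sup>k - q\<^sup>m\<^sup>+\<^sup>i)\<close> of them in
  \<open>\<bbbF>\<^sub>q\<^sup>k\<close>, and each \<open>(m+t)\<close>-space containing \<open>T\<close> is spanned together with \<open>T\<close> by exactly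
  \<open>\<Prod>\<^sub>i\<^sub><\<^sub>t (q\<^sup>m\<^sup>+\<^sup>t - q\<^sup>m\<^sup>+\<^sup>i)\<close> of them.\<close>

lemma card_span_independent:
  fixes B :: "('a::{finite,field} ^ 'n) set"
  assumes "vec.independent B"
  shows "card (vec.span B) = CARD('a) ^ card B"
proof -
  let ?comb = "\<lambda>c. \<Sum>b\<in>B. c b *s b"
  have "inj_on ?comb (B \<rightarrow>\<^sub>E UNIV)"
  proof (rule inj_onI)
    fix c d assume c: "c \<in> B \<rightarrow>\<^sub>E UNIV" and d: "d \<in> B \<rightarrow>\<^sub>E UNIV" and "?comb c = ?comb d"
    then have "(\<Sum>b\<in>B. (c b - d b) *s b) = 0"
      by (simp add: sum_subtractf algebra_simps)
    moreover have "\<forall>u. (\<Sum>b\<in>B. u b *s b) = 0 \<longrightarrow> (\<forall>b\<in>B. u b = 0)"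
      using assms unfolding vec.dependent_finite[OF finite] by blast
    ultimately have "\<forall>b\<in>B. c b = d b"
      by fastforce
    then show "c = d" using PiE_ext[OF c d] by blast
  qed
  moreover have "?comb ` (B \<rightarrow>\<^sub>E UNIV) = vec.span B"
  proof
    show "vec.span B \<subseteq> ?comb ` (B \<rightarrow>\<^sub>E UNIV)"
    proof
      fix x assume "x \<in> vec.span B"
      then obtain c where "x = ?comb c"
        by (auto simp: vec.span_finite)
      then have "x = ?comb (restrict c B)"
        by simp
      moreover have "restrict c B \<in> B \<rightarrow>\<^sub>E UNIV"
        by simp
      ultimately show "x \<in> ?comb ` (B \<rightarrow>\<^sub>E UNIV)"
        by (rule image_eqI)
    qed
  qed (auto simp: vec.span_finite)
  ultimately have "card (vec.span B) = card (B \<rightarrow>\<^sub>E (UNIV :: 'a set))"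
    using card_image by fastforce
  then show ?thesis by (simp add: card_PiE)
qed

lemma card_subspace:
  fixes S :: "('a::{finite,field} ^ 'n) set"
  assumes "vec.subspace S"
  shows "card S = CARD('a) ^ vec.dim S"
proof -
  obtain B where B: "B \<subseteq> S" "vec.independent B" "S \<subseteq> vec.span B" "card B = vec.dim S"
    using vec.basis_exists[of S] by blast
  then have "vec.span B = S"
    using vec.span_subspace assms by blast
  then show ?thesis
    using card_span_independent[OF B(2)] B(4) by simp
qed

fun independent_over :: "('a::field ^ 'n) set \<Rightarrow> ('a ^ 'n) list \<Rightarrow> bool" where
  "independent_over S [] \<longleftrightarrow> True"
| "independent_over S (v # vs) \<longleftrightarrow> v \<notin> vec.span S \<and> independent_over (insert v S) vs"

lemma dim_independent_over:
  "independent_over S vs \<Longrightarrow> vec.dim (S \<union> set vs) = vec.dim S + length vs"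
proof (induction vs arbitrary: S)
  case (Cons v vs)
  have "vec.dim (insert v S \<union> set vs) = vec.dim (insert v S) + length vs"
    using Cons.IH[of "insert v S"] Cons.prems by simp
  moreover have "vec.dim (insert v S) = vec.dim S + 1"
    using Cons.prems by (simp add: vec.dim_insert)
  moreover have "insert v S \<union> set vs = S \<union> set (v # vs)"
    by auto
  ultimately show ?case by simp
qed simp

lemma card_independent_over_lists:
  fixes S Y :: "('a::{finite,field} ^ 'n) set"
  assumes "vec.subspace Y" and "S \<subseteq> Y"
  shows "card {vs. length vs = j \<and> set vs \<subseteq> Y \<and> independent_over S vs}
           = (\<Prod>i<j. CARD('a) ^ vec.dim Y - CARD('a) ^ (vec.dim S + i))"
  using assms(2)
proof (induction j arbitrary: S)
  case 0
  have "{vs. length vs = 0 \<and> set vs \<subseteq> Y \<and> independent_over S vs} = {[]}" by auto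
  then show ?case by simp
next
  case (Suc j)
  let ?q = "CARD('a)"
  let ?A = "\<lambda>S. {vs. length vs = j \<and> set vs \<subseteq> Y \<and> independent_over S vs}"
  have split: "{vs. length vs = Suc j \<and> set vs \<subseteq> Y \<and> independent_over S vs}
        = (\<Union>v\<in>Y - vec.span S. (#) v ` ?A (insert v S))"
    by (auto simp: length_Suc_conv)
  have card_A: "card ((#) v ` ?A (insert v S)) = (\<Prod>i<j. ?q ^ vec.dim Y - ?q ^ (vec.dim S + Suc i))"
    if "v \<in> Y - vec.span S" for v
  proof -
    have "card ((#) v ` ?A (insert v S)) = card (?A (insert v S))"
      by (rule card_image) (simp add: inj_on_def)
    then show ?thesis using that Suc by (simp add: vec.dim_insert)
  qed
  have "finite (?A S')" for S'
    by (rule finite_subset[OF _ finite_lists_length_eq[OF finite_class.finite_UNIV, of j]]) auto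
  then have "card (\<Union>v\<in>Y - vec.span S. (#) v ` ?A (insert v S))
      = (\<Sum>v\<in>Y - vec.span S. card ((#) v ` ?A (insert v S)))"
    by (intro card_UN_disjoint) (simp_all, blast)
  also have "\<dots> = card (Y - vec.span S) * (\<Prod>i<j. ?q ^ vec.dim Y - ?q ^ (vec.dim S + Suc i))"
    using card_A by simp
  also have "card (Y - vec.span S) = ?q ^ vec.dim Y - ?q ^ vec.dim S"
    using Suc.prems assms(1) vec.span_minimal[of S Y]
    by (simp add: card_Diff_subset card_subspace)
  finally show ?case
    unfolding split by (simp only: prod.lessThan_Suc_shift add_0_right)
qed

lemma gauss_binom_eqI:
  fixes q :: nat
  assumes "b \<le> a" and "1 < q"
    and "N * (\<Prod>i<b. q ^ (c + b) - q ^ (c + i)) = (\<Prod>i<b. q ^ (c + a) - q ^ (c + i))"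
  shows "gauss_binom q a b = N"
proof -
  have "q ^ (c + d) - q ^ (c + i) = q ^ c * (q ^ d - q ^ i)" for d i
    by (simp add: power_add diff_mult_distrib2)
  then have shift: "(\<Prod>i<b. q ^ (c + d) - q ^ (c + i)) = q ^ (c * b) * (\<Prod>i<b. q ^ d - q ^ i)" for d
    by (simp add: prod.distrib power_mult)
  have "(\<Prod>i<b. q ^ a - q ^ i) = N * (\<Prod>i<b. q ^ b - q ^ i)"
    using assms(2,3) unfolding shift by simp
  moreover have "(\<Prod>i<b. q ^ b - q ^ i) > 0"
    using assms(2) by (auto intro!: prod_pos simp: power_strict_increasing)
  ultimately show ?thesis
    using assms(1) unfolding gauss_binom_def by simp
qed

lemma span_independent_over_eq_iff:
  fixes T X :: "('a::field ^ 'n) set"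
  assumes "vec.subspace X" and "T \<subseteq> X" and "independent_over T vs"
    and "vec.dim X = vec.dim T + length vs"
  shows "vec.span (T \<union> set vs) = X \<longleftrightarrow> set vs \<subseteq> X"
proof
  assume "vec.span (T \<union> set vs) = X"
  then show "set vs \<subseteq> X"
    using vec.span_superset[of "T \<union> set vs"] by blast
next
  assume "set vs \<subseteq> X"
  then have "vec.span (T \<union> set vs) \<subseteq> X"
    using assms(1,2) vec.span_minimal[of "T \<union> set vs" X] by blast
  moreover have "vec.dim X \<le> vec.dim (vec.span (T \<union> set vs))"
    using dim_independent_over[OF assms(3)] assms(4) by simp
  ultimately show "vec.span (T \<union> set vs) = X"
    using vec.subspace_dim_equal[OF vec.subspace_span assms(1)] by blast
qed

lemma card_eq_mult_card_fibres:
  assumes "finite A" and "finite B" and "g ` A \<subseteq> B"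
    and "\<And>b. b \<in> B \<Longrightarrow> card {a \<in> A. g a = b} = c"
  shows "card A = card B * c"
proof -
  have "card A = (\<Sum>b\<in>B. card {a \<in> A. g a = b})"
    using sum.group[OF assms(1-3), of "\<lambda>_. 1::nat"] by simp
  also have "\<dots> = card B * c"
    using assms(4) by simp
  finally show ?thesis .
qed

lemma card_superspaces_of_dim:
  fixes T :: "('a::{finite,field} ^ 'n) set"
  assumes T: "T \<in> subspaces_of_dim m" and "m + t \<le> CARD('n)"
  shows "card {X \<in> subspaces_of_dim (m + t). T \<subseteq> X} = gauss_binom CARD('a) (CARD('n) - m) t"
proof -
  let ?q = "CARD('a)"
  let ?Xs = "{X \<in> subspaces_of_dim (m + t). T \<subseteq> X}"
  let ?frames = "\<lambda>Y. {vs. length vs = t \<and> set vs \<subseteq> Y \<and> independent_over T vs}"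
  have T_dim: "vec.subspace T" "vec.dim T = m"
    using T by (auto simp: subspaces_of_dim_def)
  have "card (?frames UNIV) = card ?Xs * (\<Prod>i<t. ?q ^ (m + t) - ?q ^ (m + i))"
  proof (rule card_eq_mult_card_fibres[where g = "\<lambda>vs. vec.span (T \<union> set vs)"])
    show "finite (?frames UNIV)"
      by (rule finite_subset[OF _ finite_lists_length_eq[OF finite_class.finite_UNIV, of t]]) auto
    show "(\<lambda>vs. vec.span (T \<union> set vs)) ` ?frames UNIV \<subseteq> ?Xs"
      using dim_independent_over[of T] T_dim vec.span_superset[of "T \<union> _"]
      by (fastforce simp: subspaces_of_dim_def)
  next
    fix X assume X: "X \<in> ?Xs"
    then have "{vs \<in> ?frames UNIV. vec.span (T \<union> set vs) = X} = ?frames X"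
      using span_independent_over_eq_iff[of X T] T_dim by (auto simp: subspaces_of_dim_def)
    then show "card {vs \<in> ?frames UNIV. vec.span (T \<union> set vs) = X} = (\<Prod>i<t. ?q ^ (m + t) - ?q ^ (m + i))"
      using X card_independent_over_lists[of X T t] T_dim by (simp add: subspaces_of_dim_def)
  qed simp
  moreover have "card (?frames UNIV) = (\<Prod>i<t. ?q ^ (m + (CARD('n) - m)) - ?q ^ (m + i))"
  proof -
    have "vec.dim (UNIV :: ('a ^ 'n) set) = m + (CARD('n) - m)"
      using assms(2) by (simp add: vec.dim_UNIV card_cart_basis)
    then show ?thesis
      using card_independent_over_lists[OF vec.subspace_UNIV, of T t] T_dim by simp
  qed
  moreover have "1 < ?q"
    using card_mono[of UNIV "{0::'a, 1}"] by simp
  ultimately show ?thesis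
    using assms(2) by (intro sym[OF gauss_binom_eqI[where c = m]]) simp_all
qed

lemma induced_matchingI:
  assumes "C \<subseteq> bip_edges L R E"
    and "\<And>l r l' r'. (l, r) \<in> C \<Longrightarrow> (l', r') \<in> C \<Longrightarrow> E l r' \<Longrightarrow> l = l' \<and> r = r'"
  shows "induced_matching L R E C"
  using assms unfolding induced_matching_def bip_edges_def by blast

locale complement_assignment =
  fixes m t :: nat
    and Tf :: "('a::field ^ 'n) set \<Rightarrow> ('a ^ 'n) set \<Rightarrow> ('a ^ 'n) set"
  assumes bij: "X \<in> subspaces_of_dim (m + t) \<Longrightarrow>
      bij_betw (\<lambda>V. Tf V X) {V \<in> subspaces_of_dim t. V \<subseteq> X} {W \<in> subspaces_of_dim m. W \<subseteq> X}"
    and complement_sum_eq: "X \<in> subspaces_of_dim (m + t) \<Longrightarrow> V \<in> subspaces_of_dim t \<Longrightarrow> V \<subseteq> X \<Longrightarrow>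
      {x + y | x y. x \<in> Tf V X \<and> y \<in> V} = X"
begin

abbreviation pairs_with_complement :: "('a ^ 'n) set \<Rightarrow> (('a ^ 'n) set \<times> ('a ^ 'n) set) set" where
  "pairs_with_complement T \<equiv>
     {(V, X) \<in> bip_edges (subspaces_of_dim t) (subspaces_of_dim (m + t)) (\<subseteq>). Tf V X = T}"

lemma complement_subset:
  assumes "X \<in> subspaces_of_dim (m + t)" "V \<in> subspaces_of_dim t" "V \<subseteq> X"
  shows "Tf V X \<subseteq> X"
  using bij_betwE[OF bij[OF assms(1)]] assms(2,3) by blast

lemma pairs_with_complement_eq:
  assumes "(V1, X1) \<in> pairs_with_complement T" and "(V2, X2) \<in> pairs_with_complement T"
    and "V1 \<subseteq> X2"
  shows "V1 = V2 \<and> X1 = X2"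
proof -
  from assms(1) have V1: "V1 \<in> subspaces_of_dim t" "V1 \<subseteq> X1"
    and X1: "X1 \<in> subspaces_of_dim (m + t)" and T1: "Tf V1 X1 = T"
    by (auto simp: bip_edges_def)
  from assms(2) have V2: "V2 \<in> subspaces_of_dim t" "V2 \<subseteq> X2"
    and X2: "X2 \<in> subspaces_of_dim (m + t)" and T2: "Tf V2 X2 = T"
    by (auto simp: bip_edges_def)
  have "T \<subseteq> X2"
    using complement_subset[OF X2 V2] T2 by simp
  then have "{x + y | x y. x \<in> T \<and> y \<in> V1} \<subseteq> X2"
    using assms(3) X2 by (auto simp: subspaces_of_dim_def intro: vec.subspace_add)
  then have "X1 \<subseteq> X2"
    using complement_sum_eq[OF X1 V1] T1 by simp
  then have X: "X1 = X2"
    using X1 X2 vec.subspace_dim_equal[of X1 X2] by (simp add: subspaces_of_dim_def)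
  have "V1 = V2"
    using bij[OF X2] V1(1) V2 assms(3) T1 T2 X by (auto simp: bij_betw_def dest: inj_onD)
  with X show ?thesis by simp
qed

lemma induced_matching_pairs_with_complement:
  "induced_matching (subspaces_of_dim t) (subspaces_of_dim (m + t)) (\<subseteq>) (pairs_with_complement T)"
proof (rule induced_matchingI)
  fix V X V' X'
  assume "(V, X) \<in> pairs_with_complement T" "(V', X') \<in> pairs_with_complement T" "V \<subseteq> X'"
  then show "V = V' \<and> X = X'"
    by (rule pairs_with_complement_eq)
qed blast

lemma bij_betw_snd_pairs_with_complement:
  assumes "T \<in> subspaces_of_dim m"
  shows "bij_betw snd (pairs_with_complement T) {X \<in> subspaces_of_dim (m + t). T \<subseteq> X}"
proof (rule bij_betw_imageI)
  show "inj_on snd (pairs_with_complement T)"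
  proof (rule inj_onI)
    fix p p' assume "p \<in> pairs_with_complement T" "p' \<in> pairs_with_complement T" "snd p = snd p'"
    then obtain V V' X where "p = (V, X)" "p' = (V', X)"
      and C: "(V, X) \<in> pairs_with_complement T" "(V', X) \<in> pairs_with_complement T"
      by (metis prod.collapse)
    moreover have "V \<subseteq> X"
      using C(1) by (simp add: bip_edges_def)
    ultimately show "p = p'"
      using pairs_with_complement_eq by blast
  qed
  show "snd ` pairs_with_complement T = {X \<in> subspaces_of_dim (m + t). T \<subseteq> X}"
  proof (intro equalityI subsetI)
    fix X assume "X \<in> snd ` pairs_with_complement T"
    then show "X \<in> {X \<in> subspaces_of_dim (m + t). T \<subseteq> X}"
      using complement_subset by (fastforce simp: bip_edges_def)
  next
    fix X assume X: "X \<in> {X \<in> subspaces_of_dim (m + t). T \<subseteq> X}"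
    then have "T \<in> (\<lambda>V. Tf V X) ` {V \<in> subspaces_of_dim t. V \<subseteq> X}"
      using bij assms by (simp add: bij_betw_def)
    then show "X \<in> snd ` pairs_with_complement T"
      using X by (force simp: bip_edges_def)
  qed
qed

end

theorem lemma6:
  fixes k m t :: nat
    and Tf :: "('a::{finite, field} ^ 'n) set \<Rightarrow> ('a ^ 'n) set \<Rightarrow> ('a ^ 'n) set"
    and T :: "('a ^ 'n) set"
  assumes "k = CARD('n)"
    and "0 < m" and "0 < t" and "m + t \<le> k"
    and bij: "\<And>X. X \<in> subspaces_of_dim (m + t) \<Longrightarrow>
        bij_betw (\<lambda>V. Tf V X) {V \<in> subspaces_of_dim t. V \<subseteq> X}
                               {W \<in> subspaces_of_dim m. W \<subseteq> X}"
    and compl: "\<And>X V. X \<in> subspaces_of_dim (m + t) \<Longrightarrow> V \<in> subspaces_of_dim t \<Longrightarrow> V \<subseteq> X \<Longrightarrow>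
        Tf V X \<inter> V = {0} \<and> {x + y | x y. x \<in> Tf V X \<and> y \<in> V} = X"
    and "T \<in> subspaces_of_dim m"
  shows "induced_matching (subspaces_of_dim t) (subspaces_of_dim (m + t)) (\<subseteq>)
           {(V, X) \<in> bip_edges (subspaces_of_dim t) (subspaces_of_dim (m + t)) (\<subseteq>). Tf V X = T}
       \<and> card {(V, X) \<in> bip_edges (subspaces_of_dim t) (subspaces_of_dim (m + t)) (\<subseteq>). Tf V X = T}
           = gauss_binom CARD('a) (k - m) t"
proof -
  interpret complement_assignment m t Tf
    using bij compl by unfold_locales simp_all
  have "card (pairs_with_complement T) = card {X \<in> subspaces_of_dim (m + t). T \<subseteq> X}"
    using bij_betw_snd_pairs_with_complement[OF \<open>T \<in> subspaces_of_dim m\<close>] by (rule bij_betw_same_card)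
  also have "\<dots> = gauss_binom CARD('a) (k - m) t"
    using card_superspaces_of_dim assms by simp
  finally show ?thesis
    using induced_matching_pairs_with_complement by simp
qed

end
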